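(* Let $\Theta\vdash t$ be an $\mathsf{F_{<:}^\top}$ term-in-context which is $\beta$-normal and is not a $\lambda$- or $\Lambda$-abstraction. If $\Theta\vdash_M t:T$, then $T$ is an $\mathsf{F_{<:}^\top}$ type (i.e. $\Theta\vdash^\top T$).
   Context: System $\mathsf{F_{<:}^{K\top}}$: raw types $T ::= \top \mid X \mid T\to T \mid \forall^{\mathsf K}(X<:T).T \mid \forall^\top(X<:T).T$, up to $\alpha$-conversion. Contexts $\Theta$: finite sequences of $X<:T$ or $x:T$ with distinct variables, each type well-formed over the preceding part. Subtyping $\Theta\vdash S<:T$: (Var) $\Theta,X<:T,\Theta'\vdash X<:T$; (Top) $T<:\top$; (Refl); (Trans); ($\to$) from $S'<:S$, $T<:T'$ infer $S\to T<:S'\to T'$; ($\forall$-Fun) from $\Theta,X<:S\vdash T<:T'$ infer $\forall^{\mathsf K}(X<:S).T<:\forall^{\mathsf K}(X<:S).T'$; ($\forall$-Loc) from $\Theta\vdash T_0<:S_0$, $\Theta,X<:S_0\vdash S_1<:T_1$ infer $\forall^{\mathsf K}(X<:S_0).S_1<:\forall^\top(X<:T_0).T_1$; ($\forall$-Top) from $\Theta\vdash T_0<:S_0$, $\Theta,X<:\top\vdash S_1<:T_1$ infer $\forall^\top(X<:S_0).S_1<:\forall^\top(X<:T_0).T_1$. Raw terms $t ::= \mathsf{top}\mid x\mid\lambda(x:T).t\mid\Lambda(X<:T).t\mid t\,t\mid t\{T\}$. $\Theta^*(T)=\Theta^*(S)$ if $T\equiv X$ and $X<:S$ occurs in $\Theta$;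 $\Theta^*(T)=T$ otherwise. Minimal typing $\Theta\vdash_M t:T$: $\Theta,x:T,\Theta'\vdash_M x:T$; $\Theta\vdash_M\mathsf{top}:\top$; from $\Theta,x:S\vdash_M t:T$ infer $\Theta\vdash_M\lambda(x:S).t:S\to T$; from $\Theta\vdash_M r:R$, $\Theta\vdash_M s:S$, $\Theta\vdash S<:S'$ with $\Theta^*(R)=S'\to T$ infer $\Theta\vdash_M r\,s:T$; from $\Theta,X<:S\vdash_M t:T$ infer $\Theta\vdash_M\Lambda(X<:S).t:\forall^{\mathsf K}(X<:S).T$; from $\Theta\vdash_M r:R$, $\Theta\vdash S<:S'$ with $\Theta^*(R)=\forall^{\mathsf K}(X<:S').T$ or $\forall^\top(X<:S').T$ infer $\Theta\vdash_M r\{S\}:T[S/X]$. An $\mathsf{F_{<:}^\top}$ type is one containing only $\forall^\top$ quantifiers; an $\mathsf{F_{<:}^\top}$ term-in-context $\Theta\vdash^\top t$ is one whose context and type annotations contain only $\mathsf{F_{<:}^\top}$ types. A term is $\beta$-normal if it has no subterm of the form $(\lambda(x:S).t)\,s$ or $(\Lambda(X<:S).t)\{R\}$. *)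

theory Defs
  imports Main
begin

text \<open>System F-sub with kernel (AllK) and top (AllT) quantifiers, in de Bruijn
  representation (types/terms up to alpha-conversion). A single index space is used
  for term and type variables: index i refers to the i-th binding of the context,
  counted from the most recent one (head of the list).\<close>

datatype ty = Top | TVar nat | Arr ty ty | AllK ty ty | AllT ty ty

datatype trm = TopT | Var nat | Abs ty trm | TAbs ty trm | App trm trm | TApp trm ty

datatype binding = VarB ty | TVarB ty

type_synonym ctx = "binding list"

fun bty :: "binding \<Rightarrow> ty" where
  "bty (VarB T) = T" | "bty (TVarB T) = T"

fun shift :: "nat \<Rightarrow> nat \<Rightarrow> ty \<Rightarrow> ty" where
  "shift d c Top = Top"
| "shift d c (TVar i) = (if i < c then TVar i else TVar (i + d))"
| "shift d c (Arr S T) = Arr (shift d c S) (shift d c T)"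
| "shift d c (AllK S T) = AllK (shift d c S) (shift d (Suc c) T)"
| "shift d c (AllT S T) = AllT (shift d c S) (shift d (Suc c) T)"

fun subst :: "ty \<Rightarrow> nat \<Rightarrow> ty \<Rightarrow> ty" where
  "subst Top k S = Top"
| "subst (TVar i) k S = (if k < i then TVar (i - 1) else if i = k then shift k 0 S else TVar i)"
| "subst (Arr T U) k S = Arr (subst T k S) (subst U k S)"
| "subst (AllK T U) k S = AllK (subst T k S) (subst U (Suc k) S)"
| "subst (AllT T U) k S = AllT (subst T k S) (subst U (Suc k) S)"

fun wf_ty :: "ctx \<Rightarrow> ty \<Rightarrow> bool" where
  "wf_ty \<Gamma> Top = True"
| "wf_ty \<Gamma> (TVar i) = (i < length \<Gamma> \<and> (\<exists>U. \<Gamma> ! i = TVarB U))"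
| "wf_ty \<Gamma> (Arr S T) = (wf_ty \<Gamma> S \<and> wf_ty \<Gamma> T)"
| "wf_ty \<Gamma> (AllK S T) = (wf_ty \<Gamma> S \<and> wf_ty (TVarB S # \<Gamma>) T)"
| "wf_ty \<Gamma> (AllT S T) = (wf_ty \<Gamma> S \<and> wf_ty (TVarB S # \<Gamma>) T)"

fun wf_ctx :: "ctx \<Rightarrow> bool" where
  "wf_ctx [] = True"
| "wf_ctx (B # \<Gamma>) = (wf_ty \<Gamma> (bty B) \<and> wf_ctx \<Gamma>)"

fun wf_trm :: "ctx \<Rightarrow> trm \<Rightarrow> bool" where
  "wf_trm \<Gamma> TopT = True"
| "wf_trm \<Gamma> (Var i) = (i < length \<Gamma> \<and> (\<exists>U. \<Gamma> ! i = VarB U))"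
| "wf_trm \<Gamma> (Abs S t) = (wf_ty \<Gamma> S \<and> wf_trm (VarB S # \<Gamma>) t)"
| "wf_trm \<Gamma> (TAbs S t) = (wf_ty \<Gamma> S \<and> wf_trm (TVarB S # \<Gamma>) t)"
| "wf_trm \<Gamma> (App r s) = (wf_trm \<Gamma> r \<and> wf_trm \<Gamma> s)"
| "wf_trm \<Gamma> (TApp r S) = (wf_trm \<Gamma> r \<and> wf_ty \<Gamma> S)"

fun top_ty :: "ty \<Rightarrow> bool" where
  "top_ty Top = True"
| "top_ty (TVar i) = True"
| "top_ty (Arr S T) = (top_ty S \<and> top_ty T)"
| "top_ty (AllK S T) = False"
| "top_ty (AllT S T) = (top_ty S \<and> top_ty T)"

definition top_ctx :: "ctx \<Rightarrow> bool" where
  "top_ctx \<Gamma> = (\<forall>B \<in> set \<Gamma>. top_ty (bty B))"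

fun top_ann :: "trm \<Rightarrow> bool" where
  "top_ann TopT = True"
| "top_ann (Var i) = True"
| "top_ann (Abs S t) = (top_ty S \<and> top_ann t)"
| "top_ann (TAbs S t) = (top_ty S \<and> top_ann t)"
| "top_ann (App r s) = (top_ann r \<and> top_ann s)"
| "top_ann (TApp r S) = (top_ann r \<and> top_ty S)"

definition top_term_in_ctx :: "ctx \<Rightarrow> trm \<Rightarrow> bool" where
  "top_term_in_ctx \<Gamma> t = (wf_ctx \<Gamma> \<and> wf_trm \<Gamma> t \<and> top_ctx \<Gamma> \<and> top_ann t)"

inductive sub :: "ctx \<Rightarrow> ty \<Rightarrow> ty \<Rightarrow> bool" where
  SVar: "i < length \<Gamma> \<Longrightarrow> \<Gamma> ! i = TVarB U \<Longrightarrow> sub \<Gamma> (TVar i) (shift (Suc i) 0 U)"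
| STop: "sub \<Gamma> T Top"
| SRefl: "sub \<Gamma> T T"
| STrans: "sub \<Gamma> S U \<Longrightarrow> sub \<Gamma> U T \<Longrightarrow> sub \<Gamma> S T"
| SArr: "sub \<Gamma> S' S \<Longrightarrow> sub \<Gamma> T T' \<Longrightarrow> sub \<Gamma> (Arr S T) (Arr S' T')"
| SAllFun: "sub (TVarB S # \<Gamma>) T T' \<Longrightarrow> sub \<Gamma> (AllK S T) (AllK S T')"
| SAllLoc: "sub \<Gamma> T0 S0 \<Longrightarrow> sub (TVarB S0 # \<Gamma>) S1 T1 \<Longrightarrow> sub \<Gamma> (AllK S0 S1) (AllT T0 T1)"
| SAllTop: "sub \<Gamma> T0 S0 \<Longrightarrow> sub (TVarB Top # \<Gamma>) S1 T1 \<Longrightarrow> sub \<Gamma> (AllT S0 S1) (AllT T0 T1)"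

function expose :: "ctx \<Rightarrow> ty \<Rightarrow> ty" where
  "expose \<Gamma> T = (case T of
      TVar i \<Rightarrow> (if i < length \<Gamma> then
                   (case \<Gamma> ! i of TVarB S \<Rightarrow> shift (Suc i) 0 (expose (drop (Suc i) \<Gamma>) S)
                                | VarB _ \<Rightarrow> T)
                 else T)
    | _ \<Rightarrow> T)"
  by pat_completeness auto
termination by (relation "measure (\<lambda>(\<Gamma>, T). length \<Gamma>)") auto

inductive mtyp :: "ctx \<Rightarrow> trm \<Rightarrow> ty \<Rightarrow> bool" where
  MVar: "i < length \<Gamma> \<Longrightarrow> \<Gamma> ! i = VarB U \<Longrightarrow> mtyp \<Gamma> (Var i) (shift (Suc i) 0 U)"
| MTop: "mtyp \<Gamma> TopT Top"
| MAbs: "mtyp (VarB S # \<Gamma>) t (shift 1 0 T) \<Longrightarrow> mtyp \<Gamma> (Abs S t) (Arr S T)"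
| MApp: "mtyp \<Gamma> r R \<Longrightarrow> mtyp \<Gamma> s S \<Longrightarrow> sub \<Gamma> S S' \<Longrightarrow> expose \<Gamma> R = Arr S' T
         \<Longrightarrow> mtyp \<Gamma> (App r s) T"
| MTAbs: "mtyp (TVarB S # \<Gamma>) t T \<Longrightarrow> mtyp \<Gamma> (TAbs S t) (AllK S T)"
| MTApp: "mtyp \<Gamma> r R \<Longrightarrow> sub \<Gamma> S S' \<Longrightarrow>
          (expose \<Gamma> R = AllK S' T \<or> expose \<Gamma> R = AllT S' T)
         \<Longrightarrow> mtyp \<Gamma> (TApp r S) (subst T 0 S)"

fun beta_normal :: "trm \<Rightarrow> bool" where
  "beta_normal TopT = True"
| "beta_normal (Var i) = True"
| "beta_normal (Abs S t) = beta_normal t"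
| "beta_normal (TAbs S t) = beta_normal t"
| "beta_normal (App r s) = ((\<forall>S u. r \<noteq> Abs S u) \<and> beta_normal r \<and> beta_normal s)"
| "beta_normal (TApp r S) = ((\<forall>R u. r \<noteq> TAbs R u) \<and> beta_normal r)"

fun is_abstraction :: "trm \<Rightarrow> bool" where
  "is_abstraction (Abs S t) = True"
| "is_abstraction (TAbs S t) = True"
| "is_abstraction _ = False"

end

theory Submission
  imports Defs
begin

text \<open>Variables receive their declared types, which
  are \<open>F\<^sub><:\<^sup>\<top>\<close> types in an \<open>F\<^sub><:\<^sup>\<top>\<close> context. In an application \<open>r s\<close> or \<open>r{S}\<close>, \<open>\<beta>\<close>-normality
  together with the shape of the exposed type of \<open>r\<close> rules out that \<open>r\<close> is an abstraction, so
  the induction hypothesis makes the type of \<open>r\<close> an \<open>F\<^sub><:\<^sup>\<top>\<close> type. Exposure in an \<open>F\<^sub><:\<^sup>\<top>\<close>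
  context preserves this, so the exposed type is an arrow of \<open>F\<^sub><:\<^sup>\<top>\<close> types or a \<open>\<forall>\<^sup>\<top>\<close>
  quantifier (never a \<open>\<forall>\<^sup>K\<close> one), and instantiating it with an \<open>F\<^sub><:\<^sup>\<top>\<close> type stays in
  \<open>F\<^sub><:\<^sup>\<top>\<close>.\<close>

lemma wf_ty_change_bound:
  "wf_ty (\<Delta> @ TVarB A # \<Gamma>) T \<Longrightarrow> wf_ty (\<Delta> @ TVarB B # \<Gamma>) T"
proof (induction T arbitrary: \<Delta>)
  case (TVar i)
  then show ?case by (auto simp: nth_append nth_Cons split: nat.splits)
next
  case (AllK T1 T2)
  then show ?case using AllK.IH(2)[of "TVarB T1 # \<Delta>"] by simp
next
  case (AllT T1 T2)
  then show ?case using AllT.IH(2)[of "TVarB T1 # \<Delta>"] by simp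
qed auto

lemma wf_ty_shift:
  "wf_ty (\<Delta> @ \<Gamma>) T \<Longrightarrow> wf_ty (\<Delta> @ E @ \<Gamma>) (shift (length E) (length \<Delta>) T)"
proof (induction T arbitrary: \<Delta>)
  case (TVar i)
  then show ?case by (auto simp: nth_append)
next
  case (AllK T1 T2)
  then show ?case
    using AllK.IH(2)[of "TVarB T1 # \<Delta>"] wf_ty_change_bound[of "[]"] by fastforce
next
  case (AllT T1 T2)
  then show ?case
    using AllT.IH(2)[of "TVarB T1 # \<Delta>"] wf_ty_change_bound[of "[]"] by fastforce
qed auto

lemma wf_ty_lift_drop:
  assumes "wf_ty (drop (Suc i) \<Gamma>) T" and "i < length \<Gamma>"
  shows "wf_ty \<Gamma> (shift (Suc i) 0 T)"
proof -
  have "wf_ty (take (Suc i) \<Gamma> @ drop (Suc i) \<Gamma>) (shift (length (take (Suc i) \<Gamma>)) 0 T)"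
    using wf_ty_shift[of "[]" "drop (Suc i) \<Gamma>" T "take (Suc i) \<Gamma>"] assms(1) by simp
  moreover have "length (take (Suc i) \<Gamma>) = Suc i" using assms(2) by simp
  ultimately show ?thesis by simp
qed

lemma wf_ty_subst:
  "wf_ty (\<Delta> @ TVarB U # \<Gamma>) T \<Longrightarrow> wf_ty \<Gamma> S \<Longrightarrow> wf_ty (\<Delta> @ \<Gamma>) (subst T (length \<Delta>) S)"
proof (induction T arbitrary: \<Delta>)
  case (TVar i)
  consider "length \<Delta> < i" | "i = length \<Delta>" | "i < length \<Delta>" by linarith
  then show ?case
  proof cases
    case 1
    then show ?thesis using TVar.prems(1) by (cases i) (auto simp: nth_append)
  next
    case 2
    then show ?thesis using wf_ty_shift[of "[]" \<Gamma> S \<Delta>] TVar.prems(2) by simp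
  next
    case 3
    then show ?thesis using TVar.prems(1) by (auto simp: nth_append)
  qed
next
  case (AllK T1 T2)
  then show ?case
    using AllK.IH(2)[of "TVarB T1 # \<Delta>"] wf_ty_change_bound[of "[]"] by fastforce
next
  case (AllT T1 T2)
  then show ?case
    using AllT.IH(2)[of "TVarB T1 # \<Delta>"] wf_ty_change_bound[of "[]"] by fastforce
qed auto

lemma top_ty_shift: "top_ty T \<Longrightarrow> top_ty (shift d c T)"
  by (induction T arbitrary: c) auto

lemma top_ty_subst: "top_ty T \<Longrightarrow> top_ty S \<Longrightarrow> top_ty (subst T k S)"
  by (induction T arbitrary: k) (auto simp: top_ty_shift)

lemma wf_ctx_nth: "wf_ctx \<Gamma> \<Longrightarrow> i < length \<Gamma> \<Longrightarrow> wf_ty (drop (Suc i) \<Gamma>) (bty (\<Gamma> ! i))"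
proof (induction \<Gamma> arbitrary: i)
  case (Cons B \<Gamma>)
  then show ?case by (cases i) auto
qed simp

lemma wf_ctx_drop: "wf_ctx \<Gamma> \<Longrightarrow> wf_ctx (drop n \<Gamma>)"
proof (induction \<Gamma> arbitrary: n)
  case (Cons B \<Gamma>)
  then show ?case by (cases n) auto
qed simp

lemma top_ctx_drop: "top_ctx \<Gamma> \<Longrightarrow> top_ctx (drop n \<Gamma>)"
  unfolding top_ctx_def by (meson in_set_dropD)

lemma top_ctx_nth: "top_ctx \<Gamma> \<Longrightarrow> i < length \<Gamma> \<Longrightarrow> top_ty (bty (\<Gamma> ! i))"
  unfolding top_ctx_def by simp

lemma top_term_in_ctx_App [simp]:
  "top_term_in_ctx \<Gamma> (App r s) \<longleftrightarrow> top_term_in_ctx \<Gamma> r \<and> top_term_in_ctx \<Gamma> s"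
  by (auto simp: top_term_in_ctx_def)

lemma top_term_in_ctx_TApp [simp]:
  "top_term_in_ctx \<Gamma> (TApp r S) \<longleftrightarrow> top_term_in_ctx \<Gamma> r \<and> wf_ty \<Gamma> S \<and> top_ty S"
  by (auto simp: top_term_in_ctx_def)

lemma expose_TVar:
  "expose \<Gamma> (TVar i) = (if i < length \<Gamma> then
     (case \<Gamma> ! i of TVarB S \<Rightarrow> shift (Suc i) 0 (expose (drop (Suc i) \<Gamma>) S) | VarB _ \<Rightarrow> TVar i)
   else TVar i)"
  by (subst expose.simps) simp

lemma expose_non_TVar: "\<forall>i. T \<noteq> TVar i \<Longrightarrow> expose \<Gamma> T = T"
  by (cases T) (subst expose.simps, simp)+

declare expose.simps [simp del]

lemma expose_wf_top:
  assumes "wf_ctx \<Gamma>" "top_ctx \<Gamma>" "wf_ty \<Gamma> R" "top_ty R"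
  shows "wf_ty \<Gamma> (expose \<Gamma> R) \<and> top_ty (expose \<Gamma> R)"
  using assms
proof (induction \<Gamma> R rule: expose.induct)
  case (1 \<Gamma> T)
  show ?case
  proof (cases "\<exists>i. T = TVar i")
    case False
    then show ?thesis using "1.prems" by (simp add: expose_non_TVar)
  next
    case True
    then obtain i where T: "T = TVar i" by blast
    with "1.prems"(3) obtain S where i: "i < length \<Gamma>" "\<Gamma> ! i = TVarB S" by auto
    let ?\<Gamma>' = "drop (Suc i) \<Gamma>"
    have "wf_ty ?\<Gamma>' S" "top_ty S"
      using wf_ctx_nth[OF "1.prems"(1) i(1)] top_ctx_nth[OF "1.prems"(2) i(1)] i(2) by simp_all
    then have "wf_ty ?\<Gamma>' (expose ?\<Gamma>' S) \<and> top_ty (expose ?\<Gamma>' S)"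
      using "1.IH"[OF T i] wf_ctx_drop[OF "1.prems"(1)] top_ctx_drop[OF "1.prems"(2)] by blast
    then show ?thesis using T i wf_ty_lift_drop by (simp add: expose_TVar top_ty_shift)
  qed
qed

text \<open>An abstraction in head position would form a redex with an argument of the matching
  kind, and its minimal type has the wrong shape for an argument of the other kind.\<close>

lemma beta_normal_App_head:
  assumes "beta_normal (App r s)" "mtyp \<Gamma> r R" "expose \<Gamma> R = Arr S T"
  shows "\<not> is_abstraction r"
proof
  assume "is_abstraction r"
  with assms(1) obtain A u where "r = TAbs A u" by (cases r) auto
  with assms(2) obtain B where "R = AllK A B" by (auto elim: mtyp.cases)
  with assms(3) show False by (simp add: expose_non_TVar)
qed

lemma beta_normal_TApp_head:
  assumes "beta_normal (TApp r S)" "mtyp \<Gamma> r R" "expose \<Gamma> R = AllK S' T \<or> expose \<Gamma> R = AllT S' T"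
  shows "\<not> is_abstraction r"
proof
  assume "is_abstraction r"
  with assms(1) obtain A u where "r = Abs A u" by (cases r) auto
  with assms(2) obtain B where "R = Arr A B" by (auto elim: mtyp.cases)
  with assms(3) show False by (auto simp: expose_non_TVar)
qed

theorem lemma7p2:
  assumes "top_term_in_ctx \<Theta> t"
    and "beta_normal t"
    and "\<not> is_abstraction t"
    and "mtyp \<Theta> t T"
  shows "wf_ty \<Theta> T \<and> top_ty T"
  using assms(4,1-3)
proof (induction rule: mtyp.induct)
  case (MVar i \<Gamma> U)
  then show ?case
    using wf_ctx_nth[of \<Gamma> i] top_ctx_nth[of \<Gamma> i] wf_ty_lift_drop[of i \<Gamma> U]
    by (simp add: top_term_in_ctx_def top_ty_shift)
next
  case (MApp \<Gamma> r R s S S' T)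
  then have "wf_ty \<Gamma> R \<and> top_ty R"
    using beta_normal_App_head[OF MApp.prems(2) MApp.hyps(1,4)] by simp
  then have "wf_ty \<Gamma> (expose \<Gamma> R) \<and> top_ty (expose \<Gamma> R)"
    using expose_wf_top MApp.prems(1) by (simp add: top_term_in_ctx_def)
  then show ?case using MApp.hyps(4) by simp
next
  case (MTApp \<Gamma> r R S S' T)
  then have "wf_ty \<Gamma> R \<and> top_ty R"
    using beta_normal_TApp_head[OF MTApp.prems(2) MTApp.hyps(1,3)] by simp
  then have "wf_ty \<Gamma> (expose \<Gamma> R) \<and> top_ty (expose \<Gamma> R)"
    using expose_wf_top MTApp.prems(1) by (simp add: top_term_in_ctx_def)
  then have "wf_ty (TVarB S' # \<Gamma>) T" "top_ty T" using MTApp.hyps(3) by auto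
  then show ?case
    using MTApp.prems(1) wf_ty_subst[of "[]" S' \<Gamma> T S] top_ty_subst by simp
qed auto

end
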